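(* Let $I=[-1,1]$ and let $F:I\times I\to\mathbb R$ satisfy $F,F'_y\in\mathscr H(I,I)$, $F(0,0)=0$ and $F'_y(0,0)\neq0$. Then there exist an open neighborhood $U_1\times U_2\subset I\times I$ of $(0,0)$ and a unique $f\in\mathcal H^1(U_1)$ with $f(U_1)\subset U_2$ such that for all $(x,y)\in U_1\times U_2$: $F(x,y)=0$ if and only if $y=f(x)$.
   Context: For bounded intervals $I_1,I_2\subset\mathbb R$, $\mathscr H(I_1,I_2)$ is the set of functions $F:I_1\times I_2\to\mathbb R$ such that: (i) $F(x,\cdot)\in C^1(I_2)$ for each fixed $x\in I_1$; (ii) $F(\cdot,y)\in\mathcal H^1(I_1)$ for each fixed $y\in I_2$; (iii) there is $g\in L^2(I_1)$ with $|F'_x(x,y)|\le g(x)$ for all $(x,y)\in I_1\times I_2$. Here $\mathcal H^1(U)$ is the Sobolev space of (absolutely continuous) functions $f$ on $U$ with $f,f'\in L^2(U)$. *)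

theory Defs
  imports "HOL-Analysis.Analysis"
begin

definition L2 :: "real set \<Rightarrow> (real \<Rightarrow> real) \<Rightarrow> bool" where
  "L2 U h \<longleftrightarrow> h \<in> borel_measurable (lebesgue_on U) \<and>
                integrable (lebesgue_on U) (\<lambda>x. (h x)\<^sup>2)"

text \<open>Sobolev space H^1(U) on an interval U: f is absolutely continuous on U, i.e. an
  indefinite integral of its (a.e.) derivative f', with f and f' in L^2(U).\<close>
definition H1 :: "real set \<Rightarrow> (real \<Rightarrow> real) set" where
  "H1 U = {f. L2 U f \<and> (\<exists>f'. L2 U f' \<and>
      (\<forall>a\<in>U. \<forall>b\<in>U. a \<le> b \<longrightarrow> (f' has_integral (f b - f a)) {a..b}))}"

definition C1_on :: "real set \<Rightarrow> (real \<Rightarrow> real) \<Rightarrow> bool" where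
  "C1_on S h \<longleftrightarrow> (\<exists>D. continuous_on S D \<and>
      (\<forall>y\<in>S. (h has_real_derivative D y) (at y within S)))"

text \<open>The class H(I1,I2). Condition (iii) is stated for a representative Fx of the
  (a.e.) partial derivative in x: Fx(.,y) is a derivative of F(.,y) in the sense of H^1.\<close>
definition Hclass :: "real set \<Rightarrow> real set \<Rightarrow> (real \<Rightarrow> real \<Rightarrow> real) \<Rightarrow> bool" where
  "Hclass I1 I2 F \<longleftrightarrow>
     (\<forall>x\<in>I1. C1_on I2 (F x)) \<and>
     (\<forall>y\<in>I2. (\<lambda>x. F x y) \<in> H1 I1) \<and>
     (\<exists>Fx g. L2 I1 g \<and>
        (\<forall>y\<in>I2. \<forall>a\<in>I1. \<forall>b\<in>I1. a \<le> b \<longrightarrow>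
            ((\<lambda>x. Fx x y) has_integral (F b y - F a y)) {a..b}) \<and>
        (\<forall>x\<in>I1. \<forall>y\<in>I2. \<bar>Fx x y\<bar> \<le> g x))"

end

theory Submission
  imports Defs
begin

text \<open>
  Replacing F by sgn (F'_y(0,0)) F we may assume F'_y(0,0) > 0. The bound g1 on the
  x-derivative of F'_y makes F'_y(., y) equicontinuous, so together with the continuity
  of F'_y(0, .) we get F'_y >= c > 0 on a square [-delta, delta]^2. There F(x, .) grows
  with slope at least c, and since |F(x, y) - F(x', y)| <= |G(x) - G(x')| for the indefinite
  integral G of the bound g0 on F'_x, F(x, -delta) < 0 < F(x, delta) for |x| <= epsilon. The
  intermediate value theorem yields the unique zero f(x), and comparing F(x, f(x)) with
  F(x', f(x')) gives c |f(y) - f(x)| <= integral of g0 over [x, y].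

  A function f whose increments are dominated by the integral of some phi in L^2 lies in
  H^1: both f + Phi and Phi - f are nondecreasing for Phi the indefinite integral of phi,
  so the Lebesgue-Stieltjes measure of f + Phi is dominated by the measure with density
  2 phi, and the Radon-Nikodym theorem provides a derivative f' with |f'| <= phi a.e.
\<close>

section \<open>Square-integrable functions and indefinite integrals\<close>

lemma L2_subset:
  assumes "L2 S g" "T \<subseteq> S" "S \<in> sets lebesgue" "T \<in> sets lebesgue"
  shows "L2 T g"
proof -
  have m: "g \<in> borel_measurable (lebesgue_on S)" and i: "integrable (lebesgue_on S) (\<lambda>x. (g x)\<^sup>2)"
    using assms(1) by (auto simp: L2_def)
  have "integrable lebesgue (\<lambda>x. indicator S x *\<^sub>R (g x)\<^sup>2)"
    using i assms(3) by (simp add: integrable_restrict_space)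
  then have "integrable lebesgue (\<lambda>x. indicator T x *\<^sub>R (indicator S x *\<^sub>R (g x)\<^sup>2))"
    using assms(4) by (rule integrable_mult_indicator[rotated])
  moreover have "(\<lambda>x. indicator T x *\<^sub>R (indicator S x *\<^sub>R (g x)\<^sup>2)) = (\<lambda>x. indicator T x *\<^sub>R (g x)\<^sup>2)"
    using assms(2) by (auto simp: indicator_def fun_eq_iff)
  ultimately show ?thesis
    using measurable_restrict_mono[OF m assms(2)] assms(4) by (simp add: L2_def integrable_restrict_space)
qed

lemma L2_cmult:
  assumes "L2 S g"
  shows "L2 S (\<lambda>x. c * g x)"
  using assms Bochner_Integration.integrable_mult_right[of "c\<^sup>2" "lebesgue_on S" "\<lambda>x. (g x)\<^sup>2"]
  by (auto simp: L2_def power_mult_distrib)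

lemma L2_if_AE_abs_le:
  assumes "L2 S g" "u \<in> borel_measurable (lebesgue_on S)"
    and "AE x in lebesgue_on S. \<bar>u x\<bar> \<le> \<bar>g x\<bar>"
  shows "L2 S u"
proof -
  have "(\<lambda>x. (u x)\<^sup>2) \<in> borel_measurable (lebesgue_on S)"
    using assms(2) by measurable
  moreover have "AE x in lebesgue_on S. norm ((u x)\<^sup>2) \<le> norm ((g x)\<^sup>2)"
    using assms(3) by eventually_elim (simp add: abs_le_square_iff)
  ultimately have "integrable (lebesgue_on S) (\<lambda>x. (u x)\<^sup>2)"
    using assms(1) unfolding L2_def by (blast intro: Bochner_Integration.integrable_bound)
  then show ?thesis using assms(2) by (simp add: L2_def)
qed

lemma L2_imp_absolutely_integrable:
  fixes g :: "real \<Rightarrow> real"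
  assumes "L2 S g" "S \<in> sets lebesgue" "emeasure lebesgue S < \<infinity>"
  shows "g absolutely_integrable_on S"
proof -
  have m: "g \<in> borel_measurable (lebesgue_on S)" and i: "integrable (lebesgue_on S) (\<lambda>x. (g x)\<^sup>2)"
    using assms(1) by (auto simp: L2_def)
  have "finite_measure (lebesgue_on S)"
    using assms(2,3) by (intro finite_measureI) (simp add: emeasure_restrict_space space_restrict_space)
  then have "integrable (lebesgue_on S) (\<lambda>x. 1 + (g x)\<^sup>2)"
    using i by (intro Bochner_Integration.integrable_add finite_measure.integrable_const)
  moreover have "\<bar>t\<bar> \<le> 1 + t\<^sup>2" for t :: real
    using zero_le_power2[of "\<bar>t\<bar> - 1"] by (simp add: power2_eq_square algebra_simps)
  ultimately have "integrable (lebesgue_on S) g"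
    by (intro Bochner_Integration.integrable_bound[OF _ m]) (auto intro!: AE_I2)
  then show ?thesis using assms(2) by (simp add: set_integrable_def integrable_restrict_space)
qed

lemma L2_imp_integrable_on_Icc:
  fixes g :: "real \<Rightarrow> real"
  assumes "L2 {a..b} g"
  shows "g integrable_on {a..b}"
  using L2_imp_absolutely_integrable[OF assms] set_lebesgue_integral_eq_integral(1)
  by (simp add: emeasure_lborel_Icc_eq)

lemma L2_continuous_on_Icc:
  fixes f :: "real \<Rightarrow> real"
  assumes "continuous_on {a..b} f"
  shows "L2 {a<..<b} f"
  unfolding L2_def
proof
  show "f \<in> borel_measurable (lebesgue_on {a<..<b})"
    using continuous_on_subset[OF assms, of "{a<..<b}"]
    by (intro continuous_imp_measurable_on_sets_lebesgue) (auto simp: subset_iff)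
  have "(\<lambda>x. (f x)\<^sup>2) absolutely_integrable_on {a..b}"
    by (intro absolutely_integrable_continuous_real continuous_intros assms)
  then have "set_integrable lebesgue {a<..<b} (\<lambda>x. (f x)\<^sup>2)"
    by (rule set_integrable_subset) auto
  then show "integrable (lebesgue_on {a<..<b}) (\<lambda>x. (f x)\<^sup>2)"
    by (simp add: set_integrable_def integrable_restrict_space)
qed

lemma integral_Icc_eq_diff_indefinite:
  fixes g :: "real \<Rightarrow> real"
  assumes "g integrable_on {a..b}" "a \<le> s" "s \<le> t" "t \<le> b"
  shows "integral {s..t} g = integral {a..t} g - integral {a..s} g"
proof -
  have "integral {a..s} g + integral {s..t} g = integral {a..t} g"
    using assms integrable_on_subinterval[OF assms(1)]
    by (intro Henstock_Kurzweil_Integration.integral_combine) auto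
  then show ?thesis by simp
qed

lemma abs_diff_le_indefinite_integral:
  fixes u g :: "real \<Rightarrow> real"
  assumes g: "g integrable_on {a..b}"
    and u: "\<And>s t. a \<le> s \<Longrightarrow> s \<le> t \<Longrightarrow> t \<le> b \<Longrightarrow> \<bar>u t - u s\<bar> \<le> integral {s..t} g"
    and x: "x \<in> {a..b}" "x' \<in> {a..b}"
  shows "\<bar>u x - u x'\<bar> \<le> \<bar>integral {a..x} g - integral {a..x'} g\<bar>"
proof -
  have *: "\<bar>u t - u s\<bar> \<le> \<bar>integral {a..t} g - integral {a..s} g\<bar>"
    if "s \<in> {a..b}" "t \<in> {a..b}" "s \<le> t" for s t
    using u[of s t] integral_Icc_eq_diff_indefinite[OF g, of s t] that by auto
  show ?thesis
  proof (cases "x' \<le> x")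
    case True
    then show ?thesis using *[of x' x] x by simp
  next
    case False
    then have "\<bar>u x' - u x\<bar> \<le> \<bar>integral {a..x'} g - integral {a..x} g\<bar>"
      using *[of x x'] x by simp
    then show ?thesis by (metis abs_minus_commute)
  qed
qed

lemma continuous_on_if_dominated:
  fixes f G :: "real \<Rightarrow> real"
  assumes "continuous_on S G" "c > 0" "\<And>x x'. x \<in> S \<Longrightarrow> x' \<in> S \<Longrightarrow> c * \<bar>f x - f x'\<bar> \<le> \<bar>G x - G x'\<bar>"
  shows "continuous_on S f"
  unfolding continuous_on_iff dist_real_def
proof (intro ballI allI impI)
  fix x e :: real assume x: "x \<in> S" and e: "0 < e"
  have "c * e > 0" using assms(2) e by simp
  then obtain d where "d > 0" and d: "\<And>x'. x' \<in> S \<Longrightarrow> \<bar>x' - x\<bar> < d \<Longrightarrow> \<bar>G x' - G x\<bar> < c * e"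
    using assms(1) x unfolding continuous_on_iff dist_real_def by blast
  have "\<bar>f x' - f x\<bar> < e" if "x' \<in> S" "\<bar>x' - x\<bar> < d" for x'
  proof -
    have "c * \<bar>f x' - f x\<bar> < c * e"
      using assms(3)[OF that(1) x] d[OF that] by linarith
    then show ?thesis using assms(2) by simp
  qed
  then show "\<exists>d>0. \<forall>x'\<in>S. \<bar>x' - x\<bar> < d \<longrightarrow> \<bar>f x' - f x\<bar> < e"
    using \<open>d > 0\<close> by blast
qed

section \<open>Finite Borel measures on the real line\<close>

lemma UN_Icc_real_eq_UNIV: "(\<Union>n::nat. {- real n .. real n}) = UNIV"
proof -
  have "x \<in> (\<Union>n::nat. {- real n .. real n})" for x :: real
  proof -
    obtain n where "\<bar>x\<bar> \<le> real n" using real_arch_simple by blast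
    then show ?thesis by (intro UN_I[of n]) auto
  qed
  then show ?thesis by blast
qed

lemma finite_measure_if_emeasure_Icc_le:
  fixes M :: "real measure"
  assumes sets: "sets M = sets borel"
    and bnd: "\<And>a b. a \<le> b \<Longrightarrow> emeasure M {a..b} \<le> ennreal C"
  shows "finite_measure M"
proof
  have "emeasure M UNIV = (SUP n::nat. emeasure M {- real n .. real n})"
    by (subst SUP_emeasure_incseq) (auto simp: sets incseq_def UN_Icc_real_eq_UNIV)
  also have "\<dots> \<le> ennreal C"
    by (rule SUP_least) (auto intro: bnd)
  finally show "emeasure M (space M) \<noteq> \<infinity>"
    using sets_eq_imp_space_eq[OF sets] by (auto simp: top_unique)
qed

lemma finite_measure_interval_measure:
  assumes "mono F" "continuous_on UNIV F" "bounded (range F)"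
  shows "finite_measure (interval_measure F)"
proof -
  obtain B where B: "\<And>x. \<bar>F x\<bar> \<le> B"
    using assms(3) by (auto simp: bounded_real)
  show ?thesis
  proof (rule finite_measure_if_emeasure_Icc_le[where C = "2 * B"])
    fix a b :: real assume "a \<le> b"
    then show "emeasure (interval_measure F) {a..b} \<le> ennreal (2 * B)"
      using assms(1,2) B[of a] B[of b]
      by (subst emeasure_interval_measure_Icc) (auto simp: mono_def intro!: ennreal_leI)
  qed simp
qed

lemma measure_add_eq_if_Icc:
  fixes M1 M2 M :: "real measure"
  assumes fin: "finite_measure M1" "finite_measure M2" "finite_measure M"
    and sets: "sets M1 = sets borel" "sets M2 = sets borel" "sets M = sets borel"
    and Icc: "\<And>a b. a \<le> b \<Longrightarrow> measure M1 {a..b} + measure M2 {a..b} = measure M {a..b}"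
    and A: "A \<in> sets borel"
  shows "measure M1 A + measure M2 A = measure M A"
proof -
  have lim: "(\<lambda>n. measure N {- real n .. real n}) \<longlonglongrightarrow> measure N UNIV"
    if "finite_measure N" "sets N = sets borel" for N :: "real measure"
  proof -
    have "incseq (\<lambda>n::nat. {- real n .. real n})" by (auto simp: incseq_def)
    moreover have "range (\<lambda>n::nat. {- real n .. real n}) \<subseteq> sets N"
      using that(2) by (simp add: image_subset_iff)
    ultimately show ?thesis
      using finite_measure.finite_Lim_measure_incseq[OF that(1)] UN_Icc_real_eq_UNIV by metis
  qed
  have "(\<lambda>n. measure M {- real n .. real n}) \<longlonglongrightarrow> measure M1 UNIV + measure M2 UNIV"
    using tendsto_add[OF lim[OF fin(1) sets(1)] lim[OF fin(2) sets(2)]] by (simp add: Icc)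
  then have UNIV: "measure M1 UNIV + measure M2 UNIV = measure M UNIV"
    using lim[OF fin(3) sets(3)] by (rule LIMSEQ_unique)
  let ?G = "range (\<lambda>(a, b). {a..b::real})"
  have gen: "sets borel = sigma_sets UNIV ?G"
    by (subst borel_eq_atLeastAtMost) (simp add: sets_measure_of)
  have "Int_stable ?G" by (auto simp: Int_stable_def Int_atLeastAtMost)
  moreover have "?G \<subseteq> Pow UNIV" by simp
  moreover have "A \<in> sigma_sets UNIV ?G" using A gen by simp
  ultimately show ?thesis
  proof (induction rule: sigma_sets_induct_disjoint)
    case (basic A)
    then obtain a b where "A = {a..b}" by auto
    then show ?case by (cases "a \<le> b") (simp_all add: Icc)
  next
    case (compl A)
    then have "A \<in> sets borel" using gen by simp
    then have "measure N (UNIV - A) = measure N UNIV - measure N A"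
      if "finite_measure N" "sets N = sets borel" for N :: "real measure"
      using finite_measure.finite_measure_compl[OF that(1), of A] that(2)
      by (simp add: sets_eq_imp_space_eq[OF that(2)])
    then show ?case
      using compl.IH UNIV fin sets by simp
  next
    case (union A)
    then have "range A \<subseteq> sets borel" using gen by simp
    then have sums: "(\<lambda>i. measure N (A i)) sums measure N (\<Union>i. A i)"
      if "finite_measure N" "sets N = sets borel" for N :: "real measure"
      using finite_measure.finite_measure_UNION[OF that(1), of A] union.hyps(1) that(2) by simp
    have "(\<lambda>i. measure M (A i)) sums (measure M1 (\<Union>i. A i) + measure M2 (\<Union>i. A i))"
      using sums_add[OF sums[OF fin(1) sets(1)] sums[OF fin(2) sets(2)]] by (simp add: union.IH)
    then show ?case using sums[OF fin(3) sets(3)] by (rule sums_unique2)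
  qed simp
qed

lemma absolutely_continuous_if_measure_le:
  assumes "absolutely_continuous M D" "finite_measure N"
    and sets: "sets N = sets M" "sets D = sets M"
    and le: "\<And>A. A \<in> sets M \<Longrightarrow> measure N A \<le> measure D A"
  shows "absolutely_continuous M N"
  unfolding absolutely_continuous_def
proof
  fix A assume A: "A \<in> null_sets M"
  then have "emeasure D A = 0"
    using assms(1) unfolding absolutely_continuous_def by auto
  then have "measure N A \<le> 0"
    using le[of A] A by (auto simp: measure_def)
  then have "measure N A = 0"
    using measure_nonneg[of N A] by linarith
  then have "emeasure N A = 0"
    using finite_measure.emeasure_eq_measure[OF assms(2)] by simp
  then show "A \<in> null_sets N"
    using A sets(1) by (auto intro: null_setsI)
qed

lemma summand_of_density_has_density:
  fixes N1 N2 :: "real measure" and g :: "real \<Rightarrow> ennreal"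
  assumes g: "g \<in> borel_measurable borel"
    and fin: "finite_measure N1" "finite_measure N2" "finite_measure (density lborel g)"
    and sets: "sets N1 = sets borel" "sets N2 = sets borel"
    and sum: "\<And>A. A \<in> sets borel \<Longrightarrow> measure N1 A + measure N2 A = measure (density lborel g) A"
  obtains k where "k \<in> borel_measurable borel" "density lborel k = N1" "AE x in lborel. k x \<le> g x"
proof -
  have le: "measure N1 A \<le> measure (density lborel g) A \<and> measure N2 A \<le> measure (density lborel g) A"
    if "A \<in> sets lborel" for A
  proof -
    have "measure N1 A + measure N2 A = measure (density lborel g) A" using sum that by simp
    then show ?thesis using measure_nonneg[of N1 A] measure_nonneg[of N2 A] by linarith
  qed
  have acD: "absolutely_continuous lborel (density lborel g)"
    using g by (simp add: absolutely_continuousI_density)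
  have "absolutely_continuous lborel N1" "absolutely_continuous lborel N2"
    using absolutely_continuous_if_measure_le[OF acD] fin sets le by auto
  then obtain k1 k2 where k1: "k1 \<in> borel_measurable borel" "density lborel k1 = N1"
    and k2: "k2 \<in> borel_measurable borel" "density lborel k2 = N2"
    using sigma_finite_measure.Radon_Nikodym[OF sigma_finite_lborel, of N1]
      sigma_finite_measure.Radon_Nikodym[OF sigma_finite_lborel, of N2] sets by auto
  have "density lborel (\<lambda>x. k1 x + k2 x) = density lborel g"
  proof (rule measure_eqI)
    fix A assume "A \<in> sets (density lborel (\<lambda>x. k1 x + k2 x))"
    then have A: "A \<in> sets borel" by simp
    have "emeasure (density lborel (\<lambda>x. k1 x + k2 x)) A
        = (\<integral>\<^sup>+x. k1 x * indicator A x \<partial>lborel) + (\<integral>\<^sup>+x. k2 x * indicator A x \<partial>lborel)"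
      using k1(1) k2(1) A
      by (simp add: emeasure_density distrib_right nn_integral_add)
    also have "\<dots> = emeasure N1 A + emeasure N2 A"
      using k1 k2 A by (simp add: emeasure_density[symmetric])
    also have "\<dots> = emeasure (density lborel g) A"
      using sum[OF A] fin by (simp add: finite_measure.emeasure_eq_measure ennreal_plus[symmetric])
    finally show "emeasure (density lborel (\<lambda>x. k1 x + k2 x)) A = emeasure (density lborel g) A" .
  qed simp
  then have "AE x in lborel. k1 x + k2 x = g x"
    using sigma_finite_measure.density_unique_iff[OF sigma_finite_lborel, of "\<lambda>x. k1 x + k2 x" g]
      k1(1) k2(1) g by auto
  then have "AE x in lborel. k1 x \<le> g x"
    by eventually_elim (metis add_increasing2 order_refl zero_le)
  then show ?thesis using that k1 by blast
qed

lemma emeasure_density_Icc: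
  fixes psi :: "real \<Rightarrow> real"
  assumes "psi \<in> borel_measurable borel" "\<And>x. 0 \<le> psi x" "(psi has_integral I) {a..b}"
  shows "emeasure (density lborel (\<lambda>x. ennreal (psi x))) {a..b} = ennreal I"
proof -
  have "((\<lambda>x. psi x * indicator {a..b} x) has_integral I) UNIV"
    using assms(3) by (simp only: indicator_times_eq_if has_integral_restrict_UNIV)
  then show ?thesis
    using assms(1,2)
    by (simp add: emeasure_density nn_integral_has_integral_lborel ennreal_mult'[symmetric]
                  ennreal_indicator[symmetric])
qed

lemma measure_interval_measure_Icc:
  assumes "a \<le> b" "mono F" "continuous_on UNIV F"
  shows "measure (interval_measure F) {a..b} = F b - F a"
  using emeasure_interval_measure_Icc[OF assms(1), of F] assms monoD[OF assms(2,1)]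
  by (simp add: measure_def mono_def)

lemma has_integral_enn2real_density:
  fixes k :: "real \<Rightarrow> ennreal"
  assumes k: "k \<in> borel_measurable borel" "AE x in lborel. k x < top"
    and I: "emeasure (density lborel k) {a..b} = ennreal I" "0 \<le> I"
  shows "((\<lambda>x. enn2real (k x)) has_integral I) {a..b}"
proof -
  have "(\<integral>\<^sup>+x. ennreal (if x \<in> {a..b} then enn2real (k x) else 0) \<partial>lborel)
      = (\<integral>\<^sup>+x. k x * indicator {a..b} x \<partial>lborel)"
    using k(2) by (rule nn_integral_cong_AE[OF eventually_mono]) (auto simp: indicator_def)
  also have "\<dots> = ennreal I"
    using emeasure_density[of k lborel "{a..b}"] k(1) I(1) by simp
  finally have "((\<lambda>x. if x \<in> {a..b} then enn2real (k x) else 0) has_integral I) UNIV"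
    using k(1) I(2) by (intro nn_integral_has_integral) auto
  then show ?thesis
    by (simp only: has_integral_restrict_UNIV)
qed

lemma nondecreasing_dominated_has_density:
  fixes h P psi :: "real \<Rightarrow> real"
  assumes psi: "psi \<in> borel_measurable borel" "\<And>x. 0 \<le> psi x"
    and P: "\<And>a b. a \<le> b \<Longrightarrow> (psi has_integral (P b - P a)) {a..b}"
    and mono: "mono h" "mono (\<lambda>x. P x - h x)"
    and cont: "continuous_on UNIV h" "continuous_on UNIV P"
    and bnd: "bounded (range h)" "bounded (range P)"
  obtains k where "k \<in> borel_measurable borel" "\<And>x. 0 \<le> k x" "AE x in lborel. k x \<le> psi x"
    "\<And>a b. a \<le> b \<Longrightarrow> (k has_integral (h b - h a)) {a..b}"
proof -
  define R where "R = (\<lambda>x. P x - h x)"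
  define D where "D = density lborel (\<lambda>x. ennreal (psi x))"
  have incr: "0 \<le> h b - h a" "0 \<le> P b - P a" if "a \<le> b" for a b
    using mono that unfolding mono_def by (smt (verit))+
  have R: "mono R" "continuous_on UNIV R" "bounded (range R)"
    using mono(2) cont bnd by (auto simp: R_def intro: continuous_intros bounded_minus_comp)
  have D_Icc: "emeasure D {a..b} = ennreal (P b - P a)" if "a \<le> b" for a b
    unfolding D_def using psi P[OF that] by (rule emeasure_density_Icc)
  obtain B where B: "\<And>x. \<bar>P x\<bar> \<le> B" using bnd(2) by (auto simp: bounded_real)
  have finD: "finite_measure D"
  proof (rule finite_measure_if_emeasure_Icc_le[where C = "2 * B"])
    show "emeasure D {a..b} \<le> ennreal (2 * B)" if "a \<le> b" for a b
      using B[of a] B[of b] that by (simp add: D_Icc ennreal_leI)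
  qed (simp add: D_def)
  have finh: "finite_measure (interval_measure h)" and finR: "finite_measure (interval_measure R)"
    using mono(1) cont(1) bnd(1) R by (auto intro: finite_measure_interval_measure)
  have "measure (interval_measure h) {a..b} + measure (interval_measure R) {a..b}
      = measure D {a..b}" if "a \<le> b" for a b
  proof -
    have "measure D {a..b} = P b - P a"
      using D_Icc[OF that] incr(2)[OF that] by (simp add: measure_def)
    then show ?thesis
      using measure_interval_measure_Icc[OF that mono(1) cont(1)]
        measure_interval_measure_Icc[OF that R(1,2)] by (simp add: R_def)
  qed
  \<comment> \<open>The Lebesgue-Stieltjes measures of the nondecreasing functions h and P - h add up to
      the measure with density psi, so the first one has a density below psi.\<close>
  then have "measure (interval_measure h) A + measure (interval_measure R) A = measure D A"
    if "A \<in> sets borel" for A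
    using measure_add_eq_if_Icc[OF finh finR finD _ _ _ _ that] by (simp add: D_def)
  then obtain k1 where k1: "k1 \<in> borel_measurable borel" "density lborel k1 = interval_measure h"
    "AE x in lborel. k1 x \<le> ennreal (psi x)"
    using summand_of_density_has_density[of "\<lambda>x. ennreal (psi x)" "interval_measure h" "interval_measure R"]
      psi(1) finh finR finD unfolding D_def by auto
  show ?thesis
  proof
    show "(\<lambda>x. enn2real (k1 x)) \<in> borel_measurable borel" using k1(1) by simp
    show "AE x in lborel. enn2real (k1 x) \<le> psi x"
      using k1(3) by eventually_elim (simp add: enn2real_leI psi(2))
    have "AE x in lborel. k1 x < top"
      using k1(3) by eventually_elim (metis ennreal_less_top le_less_trans)
    then show "((\<lambda>x. enn2real (k1 x)) has_integral (h b - h a)) {a..b}" if "a \<le> b" for a b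
      using k1(1,2) that incr(1)[OF that] mono(1) cont(1)
      by (intro has_integral_enn2real_density) (simp_all add: emeasure_interval_measure_Icc mono_def)
  qed simp
qed

section \<open>Functions with dominated increments\<close>

lemma lebesgue_measurable_nonneg_borel_version:
  fixes u :: "real \<Rightarrow> real"
  assumes "u \<in> borel_measurable lebesgue" "\<And>x. 0 \<le> u x"
  obtains v where "v \<in> borel_measurable borel" "\<And>x. 0 \<le> v x" "negligible {x. u x \<noteq> v x}"
proof -
  obtain v0 where v0: "v0 \<in> borel_measurable borel" "AE x in lborel. u x = v0 x"
    using completion_ex_borel_measurable_real[OF assms(1)] by auto
  have "AE x in lborel. u x = max 0 (v0 x)"
    using v0(2) by eventually_elim (metis assms(2) max.absorb2)
  then obtain N where N: "{x \<in> space lborel. u x \<noteq> max 0 (v0 x)} \<subseteq> N"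
    "emeasure lborel N = 0" "N \<in> sets lborel"
    by (rule AE_E)
  then have "negligible N"
    by (simp add: negligible_iff_null_sets null_sets_completionI null_setsI)
  then have "negligible {x. u x \<noteq> max 0 (v0 x)}"
    by (rule negligible_subset) (use N(1) in auto)
  then show ?thesis
    using that[of "\<lambda>x. max 0 (v0 x)"] v0(1) by auto
qed

lemma clamped_indefinite_integral_has_density:
  fixes phi :: "real \<Rightarrow> real"
  assumes phi: "phi absolutely_integrable_on {a0..b0}" "\<And>x. x \<in> {a0..b0} \<Longrightarrow> 0 \<le> phi x"
    and "a0 \<le> b0"
  defines "Phi x \<equiv> integral {a0..max a0 (min b0 x)} phi"
  obtains psi where "psi \<in> borel_measurable borel" "\<And>x. 0 \<le> psi x"
    "AE x in lebesgue. x \<in> {a0..b0} \<longrightarrow> psi x = phi x"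
    "\<And>a b. a \<le> b \<Longrightarrow> (psi has_integral (Phi b - Phi a)) {a..b}"
proof -
  define u where "u x = (if x \<in> {a0..b0} then phi x else 0)" for x
  have "integrable lebesgue (\<lambda>x. indicator {a0..b0} x *\<^sub>R phi x)"
    using phi(1) by (simp add: set_integrable_def)
  moreover have "(\<lambda>x. indicator {a0..b0} x *\<^sub>R phi x) = u"
    by (auto simp: u_def indicator_def)
  ultimately have "u \<in> borel_measurable lebesgue"
    by (metis borel_measurable_integrable)
  moreover have "0 \<le> u x" for x
    using phi(2) by (simp add: u_def)
  ultimately obtain psi where psi: "psi \<in> borel_measurable borel" "\<And>x. 0 \<le> psi x"
    and negl: "negligible {x. u x \<noteq> psi x}"
    by (rule lebesgue_measurable_nonneg_borel_version) auto
  have phi_i: "phi integrable_on {a0..b0}"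
    using phi(1) set_lebesgue_integral_eq_integral(1) by blast
  have u_int: "(u has_integral (Phi b - Phi a)) {a..b}" if "a \<le> b" for a b
  proof -
    have "(phi has_integral (Phi b - Phi a)) ({a0..b0} \<inter> {a..b})"
    proof (cases "max a a0 \<le> min b b0")
      case True
      then have "{a0..b0} \<inter> {a..b} = {max a a0..min b b0}" by auto
      moreover have "max a0 (min b0 a) = max a a0" "max a0 (min b0 b) = min b b0"
        using True \<open>a0 \<le> b0\<close> that by auto
      then have "Phi b - Phi a = integral {max a a0..min b b0} phi"
        using True integral_Icc_eq_diff_indefinite[OF phi_i, of "max a a0" "min b b0"]
        by (simp add: Phi_def)
      ultimately show ?thesis
        using True integrable_on_subinterval[OF phi_i] by (simp add: has_integral_integral)
    next
      case False
      then have "b0 < a \<or> b < a0"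
        using that \<open>a0 \<le> b0\<close> by (auto simp: max_def min_def split: if_splits)
      then have "{a0..b0} \<inter> {a..b} = {}" "max a0 (min b0 a) = max a0 (min b0 b)"
        using that \<open>a0 \<le> b0\<close> by auto
      then show ?thesis by (simp add: Phi_def)
    qed
    then show ?thesis
      unfolding u_def by (simp only: has_integral_restrict_Int)
  qed
  have "(psi has_integral (Phi b - Phi a)) {a..b}" if "a \<le> b" for a b
    by (rule has_integral_spike[OF negl _ u_int[OF that]]) auto
  moreover have "AE x in lebesgue. x \<in> {a0..b0} \<longrightarrow> psi x = phi x"
    using negl unfolding negligible_iff_null_sets
    by (rule AE_I') (auto simp: u_def)
  ultimately show ?thesis
    using that psi by blast
qed

lemma continuous_bounded_clamp_extension:
  fixes g :: "real \<Rightarrow> real"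
  assumes "continuous_on {a0..b0} g" "a0 \<le> b0"
  shows "continuous_on UNIV (\<lambda>x. g (max a0 (min b0 x)))"
    and "bounded (range (\<lambda>x. g (max a0 (min b0 x))))"
proof -
  have range: "max a0 (min b0 x) \<in> {a0..b0}" for x
    using assms(2) by auto
  have "continuous_on UNIV (\<lambda>x. max a0 (min b0 x))"
    by (intro continuous_intros)
  then show "continuous_on UNIV (\<lambda>x. g (max a0 (min b0 x)))"
    by (rule continuous_on_compose2[OF assms(1)]) (auto intro: range)
  have "bounded (g ` {a0..b0})"
    by (intro compact_imp_bounded compact_continuous_image assms(1) compact_Icc)
  then show "bounded (range (\<lambda>x. g (max a0 (min b0 x))))"
    by (rule bounded_subset) (auto intro: range)
qed

lemma continuous_on_if_increments_dominated:
  fixes f phi :: "real \<Rightarrow> real"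
  assumes "phi integrable_on {a0..b0}"
    and "\<And>x y. a0 \<le> x \<Longrightarrow> x \<le> y \<Longrightarrow> y \<le> b0 \<Longrightarrow> \<bar>f y - f x\<bar> \<le> integral {x..y} phi"
  shows "continuous_on {a0..b0} f"
proof (rule continuous_on_if_dominated[where c = 1 and G = "\<lambda>x. integral {a0..x} phi"])
  show "continuous_on {a0..b0} (\<lambda>x. integral {a0..x} phi)"
    by (rule indefinite_integral_continuous_1[OF assms(1)])
  show "1 * \<bar>f x - f x'\<bar> \<le> \<bar>integral {a0..x} phi - integral {a0..x'} phi\<bar>"
    if "x \<in> {a0..b0}" "x' \<in> {a0..b0}" for x x'
    using abs_diff_le_indefinite_integral[OF assms that] by simp
qed simp

lemma density_if_increments_dominated:
  fixes f phi :: "real \<Rightarrow> real"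
  assumes "a0 \<le> b0"
    and phi: "phi absolutely_integrable_on {a0..b0}" "\<And>x. x \<in> {a0..b0} \<Longrightarrow> 0 \<le> phi x"
    and f: "\<And>x y. a0 \<le> x \<Longrightarrow> x \<le> y \<Longrightarrow> y \<le> b0 \<Longrightarrow> \<bar>f y - f x\<bar> \<le> integral {x..y} phi"
  obtains f' where "f' \<in> borel_measurable borel"
    "AE x in lebesgue. x \<in> {a0..b0} \<longrightarrow> \<bar>f' x\<bar> \<le> phi x"
    "\<And>a b. a0 \<le> a \<Longrightarrow> a \<le> b \<Longrightarrow> b \<le> b0 \<Longrightarrow> (f' has_integral (f b - f a)) {a..b}"
proof -
  have phi_i: "phi integrable_on {a0..b0}"
    using phi(1) set_lebesgue_integral_eq_integral(1) by blast
  \<comment> \<open>Freezing f and the indefinite integral outside [a0, b0] keeps h and 2 Phi - h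
      nondecreasing on the whole line.\<close>
  define cl where "cl x = max a0 (min b0 x)" for x
  define Phi where "Phi x = integral {a0..cl x} phi" for x
  define h where "h x = f (cl x) + Phi x" for x
  obtain psi where psi: "psi \<in> borel_measurable borel" "\<And>x. 0 \<le> psi x"
    "AE x in lebesgue. x \<in> {a0..b0} \<longrightarrow> psi x = phi x"
    "\<And>a b. a \<le> b \<Longrightarrow> (psi has_integral (Phi b - Phi a)) {a..b}"
    using clamped_indefinite_integral_has_density[OF phi \<open>a0 \<le> b0\<close>] unfolding Phi_def cl_def by blast
  have f_cl: "\<bar>f (cl y) - f (cl x)\<bar> \<le> Phi y - Phi x" if "x \<le> y" for x y
    using f[of "cl x" "cl y"] integral_Icc_eq_diff_indefinite[OF phi_i, of "cl x" "cl y"]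
      that \<open>a0 \<le> b0\<close> by (simp add: Phi_def cl_def)
  have "h x \<le> h y \<and> 2 * Phi x - h x \<le> 2 * Phi y - h y" if "x \<le> y" for x y
    using f_cl[OF that] unfolding h_def abs_le_iff by linarith
  then have mono: "mono h" "mono (\<lambda>x. 2 * Phi x - h x)"
    by (auto simp: mono_def)
  have "continuous_on {a0..b0} (\<lambda>x. f x + integral {a0..x} phi)"
    using continuous_on_if_increments_dominated[OF phi_i f]
    by (intro continuous_intros indefinite_integral_continuous_1 phi_i)
  then have h: "continuous_on UNIV h" "bounded (range h)"
    using continuous_bounded_clamp_extension[OF _ \<open>a0 \<le> b0\<close>] by (simp_all add: h_def Phi_def cl_def)
  have "continuous_on {a0..b0} (\<lambda>x. 2 * integral {a0..x} phi)"
    by (intro continuous_intros indefinite_integral_continuous_1 phi_i)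
  then have Phi: "continuous_on UNIV (\<lambda>x. 2 * Phi x)" "bounded (range (\<lambda>x. 2 * Phi x))"
    using continuous_bounded_clamp_extension[OF _ \<open>a0 \<le> b0\<close>] by (simp_all add: Phi_def cl_def)
  have "((\<lambda>x. 2 * psi x) has_integral (2 * Phi b - 2 * Phi a)) {a..b}" if "a \<le> b" for a b
    using has_integral_mult_right[OF psi(4)[OF that], of 2] by (simp add: algebra_simps)
  then obtain k where k: "k \<in> borel_measurable borel" "\<And>x. 0 \<le> k x"
    "AE x in lborel. k x \<le> 2 * psi x" "\<And>a b. a \<le> b \<Longrightarrow> (k has_integral (h b - h a)) {a..b}"
    using nondecreasing_dominated_has_density[of "\<lambda>x. 2 * psi x" "\<lambda>x. 2 * Phi x" h] psi(1,2) mono h Phi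
    by auto
  show ?thesis
  proof
    show "(\<lambda>x. k x - psi x) \<in> borel_measurable borel" using k(1) psi(1) by simp
    show "AE x in lebesgue. x \<in> {a0..b0} \<longrightarrow> \<bar>k x - psi x\<bar> \<le> phi x"
      using AE_completion[OF k(3)] psi(3)
    proof eventually_elim
      case (elim x)
      then show ?case using k(2)[of x] psi(2)[of x] by (auto simp: abs_le_iff)
    qed
    fix a b assume ab: "a0 \<le> a" "a \<le> b" "b \<le> b0"
    have "h b - h a - (Phi b - Phi a) = f b - f a"
      using ab by (simp add: h_def cl_def)
    then show "((\<lambda>x. k x - psi x) has_integral (f b - f a)) {a..b}"
      using has_integral_diff[OF k(4)[OF ab(2)] psi(4)[OF ab(2)]] by simp
  qed
qed

lemma H1_if_increments_dominated:
  fixes f phi :: "real \<Rightarrow> real"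
  assumes "a0 < b0"
    and phi: "L2 {a0..b0} phi" "\<And>x. x \<in> {a0..b0} \<Longrightarrow> 0 \<le> phi x"
    and f: "\<And>x y. a0 \<le> x \<Longrightarrow> x \<le> y \<Longrightarrow> y \<le> b0 \<Longrightarrow> \<bar>f y - f x\<bar> \<le> integral {x..y} phi"
  shows "f \<in> H1 {a0<..<b0}"
proof -
  have phi_ai: "phi absolutely_integrable_on {a0..b0}"
    using L2_imp_absolutely_integrable[OF phi(1)] by (simp add: emeasure_lborel_Icc_eq)
  have "phi integrable_on {a0..b0}"
    using phi(1) by (rule L2_imp_integrable_on_Icc)
  then have "L2 {a0<..<b0} f"
    using L2_continuous_on_Icc continuous_on_if_increments_dominated f by blast
  moreover obtain f' where f': "f' \<in> borel_measurable borel"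
    "AE x in lebesgue. x \<in> {a0..b0} \<longrightarrow> \<bar>f' x\<bar> \<le> phi x"
    "\<And>a b. a0 \<le> a \<Longrightarrow> a \<le> b \<Longrightarrow> b \<le> b0 \<Longrightarrow> (f' has_integral (f b - f a)) {a..b}"
    using density_if_increments_dominated[OF _ phi_ai phi(2) f] \<open>a0 < b0\<close> by auto
  have "L2 {a0<..<b0} f'"
  proof (rule L2_if_AE_abs_le)
    show "L2 {a0<..<b0} phi" by (rule L2_subset[OF phi(1)]) auto
    show "f' \<in> borel_measurable (lebesgue_on {a0<..<b0})"
      using f'(1) by (intro measurable_restrict_space1 measurable_completion) simp
    have "AE x in lebesgue. x \<in> {a0<..<b0} \<longrightarrow> \<bar>f' x\<bar> \<le> \<bar>phi x\<bar>"
      using f'(2) by eventually_elim (use phi(2) in force)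
    then show "AE x in lebesgue_on {a0<..<b0}. \<bar>f' x\<bar> \<le> \<bar>phi x\<bar>"
      by (simp add: AE_restrict_space_iff)
  qed
  ultimately show ?thesis
    unfolding H1_def using f'(3) by auto
qed

section \<open>The implicit function\<close>

lemma slope_lower_bound_if_derivative_ge:
  fixes u u' :: "real \<Rightarrow> real"
  assumes "y \<le> y'"
    and "\<And>t. y \<le> t \<Longrightarrow> t \<le> y' \<Longrightarrow> (u has_real_derivative u' t) (at t)"
    and "\<And>t. y \<le> t \<Longrightarrow> t \<le> y' \<Longrightarrow> c \<le> u' t"
  shows "c * (y' - y) \<le> u y' - u y"
proof -
  have "u y - c * y \<le> u y' - c * y'"
  proof (rule DERIV_nonneg_imp_nondecreasing[OF assms(1)])
    fix t assume "y \<le> t" "t \<le> y'"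
    then show "\<exists>d. ((\<lambda>t. u t - c * t) has_real_derivative d) (at t) \<and> 0 \<le> d"
      using assms(2,3) by (intro exI conjI derivative_eq_intros) auto
  qed
  then show ?thesis by (simp add: algebra_simps)
qed

lemma implicit_function_if_uniform_slope:
  fixes F :: "real \<Rightarrow> real \<Rightarrow> real" and G :: "real \<Rightarrow> real"
  assumes "c > 0" "\<delta> > 0"
    and slope: "\<And>x y y'. x \<in> X \<Longrightarrow> -\<delta> \<le> y \<Longrightarrow> y \<le> y' \<Longrightarrow> y' \<le> \<delta> \<Longrightarrow> c * (y' - y) \<le> F x y' - F x y"
    and cont: "\<And>x. x \<in> X \<Longrightarrow> continuous_on {-\<delta>..\<delta>} (F x)"
    and sign: "\<And>x. x \<in> X \<Longrightarrow> F x (-\<delta>) < 0 \<and> 0 < F x \<delta>"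
    and G: "\<And>x x' y. x \<in> X \<Longrightarrow> x' \<in> X \<Longrightarrow> y \<in> {-\<delta>..\<delta>} \<Longrightarrow> \<bar>F x y - F x' y\<bar> \<le> \<bar>G x - G x'\<bar>"
  obtains f where "\<And>x. x \<in> X \<Longrightarrow> f x \<in> {-\<delta><..<\<delta>}"
    "\<And>x y. x \<in> X \<Longrightarrow> y \<in> {-\<delta>..\<delta>} \<Longrightarrow> F x y = 0 \<longleftrightarrow> y = f x"
    "\<And>x x'. x \<in> X \<Longrightarrow> x' \<in> X \<Longrightarrow> c * \<bar>f x - f x'\<bar> \<le> \<bar>G x - G x'\<bar>"
proof -
  have sep: "c * \<bar>y' - y\<bar> \<le> \<bar>F x y' - F x y\<bar>" if "x \<in> X" "y \<in> {-\<delta>..\<delta>}" "y' \<in> {-\<delta>..\<delta>}" for x y y'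
  proof (cases "y \<le> y'")
    case True
    then have "c * \<bar>y' - y\<bar> \<le> F x y' - F x y" using slope[of x y y'] that by simp
    then show ?thesis using abs_ge_self[of "F x y' - F x y"] by linarith
  next
    case False
    then have "c * \<bar>y' - y\<bar> \<le> F x y - F x y'" using slope[of x y' y] that by simp
    then show ?thesis
      using abs_ge_self[of "F x y - F x y'"] abs_minus_commute[of "F x y" "F x y'"] by linarith
  qed
  have root: "\<exists>y\<in>{-\<delta><..<\<delta>}. F x y = 0" if x: "x \<in> X" for x
  proof -
    have "F x (-\<delta>) \<le> 0" "0 \<le> F x \<delta>" "-\<delta> \<le> \<delta>"
      using sign[OF x] \<open>\<delta> > 0\<close> by auto
    then obtain y where "-\<delta> \<le> y" "y \<le> \<delta>" "F x y = 0"
      using IVT'[OF _ _ _ cont[OF x]] by blast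
    moreover have "y \<noteq> -\<delta>" "y \<noteq> \<delta>" using sign[OF x] \<open>F x y = 0\<close> by auto
    ultimately show ?thesis by auto
  qed
  have unique: "y = y'" if "x \<in> X" "y \<in> {-\<delta>..\<delta>}" "y' \<in> {-\<delta>..\<delta>}" "F x y = 0" "F x y' = 0" for x y y'
    using sep[OF that(1-3)] that(4,5) \<open>c > 0\<close> by (simp add: mult_le_0_iff)
  define f where "f x = (THE y. y \<in> {-\<delta>..\<delta>} \<and> F x y = 0)" for x
  have f: "f x \<in> {-\<delta><..<\<delta>} \<and> F x (f x) = 0" if x: "x \<in> X" for x
  proof -
    obtain y where y: "y \<in> {-\<delta><..<\<delta>}" "F x y = 0" using root[OF x] by blast
    have "f x = y"
      unfolding f_def
    proof (rule the_equality)
      show "y \<in> {-\<delta>..\<delta>} \<and> F x y = 0" using y by auto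
      show "z = y" if "z \<in> {-\<delta>..\<delta>} \<and> F x z = 0" for z
        using unique[OF x, of z y] that y by auto
    qed
    then show ?thesis using y by simp
  qed
  show ?thesis
  proof
    show "f x \<in> {-\<delta><..<\<delta>}" if "x \<in> X" for x using f[OF that] by blast
    show "F x y = 0 \<longleftrightarrow> y = f x" if "x \<in> X" "y \<in> {-\<delta>..\<delta>}" for x y
      using f[OF that(1)] unique[OF that, of "f x"] by fastforce
    show "c * \<bar>f x - f x'\<bar> \<le> \<bar>G x - G x'\<bar>" if "x \<in> X" "x' \<in> X" for x x'
    proof -
      have "c * \<bar>f x - f x'\<bar> \<le> \<bar>F x' (f x) - F x' (f x')\<bar>"
        using sep[OF that(2), of "f x'" "f x"] f[OF that(1)] f[OF that(2)] by auto
      also have "\<dots> = \<bar>F x (f x) - F x' (f x)\<bar>"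
        using f[OF that(1)] f[OF that(2)] by simp
      also have "\<dots> \<le> \<bar>G x - G x'\<bar>"
        using G[OF that, of "f x"] f[OF that(1)] by auto
      finally show ?thesis .
    qed
  qed
qed

lemma uniform_lower_bound_near_origin:
  fixes H :: "real \<Rightarrow> real \<Rightarrow> real" and g :: "real \<Rightarrow> real"
  assumes g: "g integrable_on {-1..1}"
    and H: "\<And>y a b. y \<in> {-1..1} \<Longrightarrow> -1 \<le> a \<Longrightarrow> a \<le> b \<Longrightarrow> b \<le> 1 \<Longrightarrow>
              \<bar>H b y - H a y\<bar> \<le> integral {a..b} g"
    and cont: "continuous_on {-1..1} (H 0)" and "c < H 0 0"
  obtains \<delta> where "0 < \<delta>" "\<delta> < 1" "\<And>x y. \<bar>x\<bar> \<le> \<delta> \<Longrightarrow> \<bar>y\<bar> \<le> \<delta> \<Longrightarrow> c < H x y"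
proof -
  define e where "e = (H 0 0 - c) / 2"
  define G where "G x = integral {-1..x} g" for x
  have "e > 0" using \<open>c < H 0 0\<close> by (simp add: e_def)
  moreover have "continuous_on {-1..1} G"
    unfolding G_def by (rule indefinite_integral_continuous_1[OF g])
  ultimately obtain d1 where "d1 > 0" and d1: "\<And>x. x \<in> {-1..1} \<Longrightarrow> \<bar>x - 0\<bar> < d1 \<Longrightarrow> \<bar>G x - G 0\<bar> < e"
    using cont unfolding continuous_on_iff dist_real_def by (metis atLeastAtMost_iff neg_le_0_iff_le zero_le_one)
  obtain d2 where "d2 > 0" and d2: "\<And>y. y \<in> {-1..1} \<Longrightarrow> \<bar>y - 0\<bar> < d2 \<Longrightarrow> \<bar>H 0 y - H 0 0\<bar> < e"
    using cont \<open>e > 0\<close> unfolding continuous_on_iff dist_real_def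
    by (metis atLeastAtMost_iff neg_le_0_iff_le zero_le_one)
  define \<delta> where "\<delta> = min (min d1 d2) 1 / 2"
  show ?thesis
  proof
    show "0 < \<delta>" "\<delta> < 1" using \<open>d1 > 0\<close> \<open>d2 > 0\<close> by (auto simp: \<delta>_def)
    fix x y assume xy: "\<bar>x\<bar> \<le> \<delta>" "\<bar>y\<bar> \<le> \<delta>"
    then have range: "x \<in> {-1..1}" "y \<in> {-1..1}" "\<bar>x\<bar> < d1" "\<bar>y\<bar> < d2"
      using \<open>d1 > 0\<close> \<open>d2 > 0\<close> by (auto simp: \<delta>_def)
    have "\<bar>H x y - H 0 y\<bar> \<le> \<bar>G x - G 0\<bar>"
      unfolding G_def using abs_diff_le_indefinite_integral[OF g, of "\<lambda>t. H t y" x 0] H range by auto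
    then show "c < H x y"
      using d1[of x] d2[of y] range abs_ge_minus_self[of "H 0 y - H 0 0"]
      by (simp add: e_def abs_le_iff)
  qed
qed

lemma slope_bound_near_origin:
  fixes F Fy :: "real \<Rightarrow> real \<Rightarrow> real" and g :: "real \<Rightarrow> real"
  assumes Fy: "\<And>x y. x \<in> {-1..1} \<Longrightarrow> y \<in> {-1..1} \<Longrightarrow>
                 (F x has_real_derivative Fy x y) (at y within {-1..1})"
    and Fy0: "continuous_on {-1..1} (Fy 0)"
    and g: "g integrable_on {-1..1}"
      "\<And>y a b. y \<in> {-1..1} \<Longrightarrow> -1 \<le> a \<Longrightarrow> a \<le> b \<Longrightarrow> b \<le> 1 \<Longrightarrow>
         \<bar>Fy b y - Fy a y\<bar> \<le> integral {a..b} g"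
    and pos: "0 < Fy 0 0"
  obtains c \<delta> where "0 < c" "0 < \<delta>" "\<delta> < 1"
    "\<And>x y y'. \<bar>x\<bar> \<le> \<delta> \<Longrightarrow> -\<delta> \<le> y \<Longrightarrow> y \<le> y' \<Longrightarrow> y' \<le> \<delta> \<Longrightarrow> c * (y' - y) \<le> F x y' - F x y"
proof -
  define c where "c = Fy 0 0 / 2"
  obtain \<delta> where \<delta>: "0 < \<delta>" "\<delta> < 1" and Fy_gt: "\<And>x y. \<bar>x\<bar> \<le> \<delta> \<Longrightarrow> \<bar>y\<bar> \<le> \<delta> \<Longrightarrow> c < Fy x y"
    using uniform_lower_bound_near_origin[OF g Fy0, of c] pos by (auto simp: c_def)
  have "c * (y' - y) \<le> F x y' - F x y" if "\<bar>x\<bar> \<le> \<delta>" "-\<delta> \<le> y" "y \<le> y'" "y' \<le> \<delta>" for x y y'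
  proof (rule slope_lower_bound_if_derivative_ge[OF that(3)])
    fix t assume t: "y \<le> t" "t \<le> y'"
    then have "t \<in> {-1<..<1}" "x \<in> {-1..1}" "\<bar>t\<bar> \<le> \<delta>" using that \<delta> by auto
    then show "(F x has_real_derivative Fy x t) (at t)" "c \<le> Fy x t"
      using Fy[of x t] at_within_interior[of t "{-1..1}"] Fy_gt[of x t] that(1) by auto
  qed
  moreover have "0 < c" using pos by (simp add: c_def)
  ultimately show ?thesis using that \<delta> by blast
qed

lemma implicit_zero_locus_if_slope:
  fixes F :: "real \<Rightarrow> real \<Rightarrow> real" and g :: "real \<Rightarrow> real"
  assumes cont: "\<And>x. x \<in> {-1..1} \<Longrightarrow> continuous_on {-1..1} (F x)"
    and g: "g integrable_on {-1..1}" "\<And>x. x \<in> {-1..1} \<Longrightarrow> 0 \<le> g x"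
      "\<And>y a b. y \<in> {-1..1} \<Longrightarrow> -1 \<le> a \<Longrightarrow> a \<le> b \<Longrightarrow> b \<le> 1 \<Longrightarrow>
         \<bar>F b y - F a y\<bar> \<le> integral {a..b} g"
    and F00: "F 0 0 = 0" and "0 < c" and \<delta>: "0 < \<delta>" "\<delta> < 1"
    and slope: "\<And>x y y'. \<bar>x\<bar> \<le> \<delta> \<Longrightarrow> -\<delta> \<le> y \<Longrightarrow> y \<le> y' \<Longrightarrow> y' \<le> \<delta> \<Longrightarrow>
                  c * (y' - y) \<le> F x y' - F x y"
  obtains \<epsilon> f where "0 < \<epsilon>" "\<epsilon> < \<delta>"
    "\<And>x. x \<in> {-\<epsilon>..\<epsilon>} \<Longrightarrow> f x \<in> {-\<delta><..<\<delta>}"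
    "\<And>x y. x \<in> {-\<epsilon>..\<epsilon>} \<Longrightarrow> y \<in> {-\<delta>..\<delta>} \<Longrightarrow> F x y = 0 \<longleftrightarrow> y = f x"
    "\<And>x y. -\<epsilon> \<le> x \<Longrightarrow> x \<le> y \<Longrightarrow> y \<le> \<epsilon> \<Longrightarrow> c * \<bar>f y - f x\<bar> \<le> integral {x..y} g"
proof -
  define G where "G x = integral {-1..x} g" for x
  have Fx: "\<bar>F x y - F x' y\<bar> \<le> \<bar>G x - G x'\<bar>" if "x \<in> {-1..1}" "x' \<in> {-1..1}" "y \<in> {-1..1}" for x x' y
    unfolding G_def using abs_diff_le_indefinite_integral[OF g(1), of "\<lambda>t. F t y"] g(3) that by auto
  have "continuous_on {-1..1} G"
    unfolding G_def by (rule indefinite_integral_continuous_1[OF g(1)])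
  moreover have "0 < c * \<delta>" using \<open>0 < c\<close> \<delta> by simp
  ultimately obtain d where "d > 0" and d: "\<And>x. x \<in> {-1..1} \<Longrightarrow> \<bar>x - 0\<bar> < d \<Longrightarrow> \<bar>G x - G 0\<bar> < c * \<delta>"
    unfolding continuous_on_iff dist_real_def by (metis atLeastAtMost_iff neg_le_0_iff_le zero_le_one)
  define \<epsilon> where "\<epsilon> = min d \<delta> / 2"
  have \<epsilon>: "0 < \<epsilon>" "\<epsilon> < \<delta>" "\<epsilon> < d" using \<open>d > 0\<close> \<delta> by (auto simp: \<epsilon>_def)
  have sign: "F x (-\<delta>) < 0 \<and> 0 < F x \<delta>" if "x \<in> {-\<epsilon>..\<epsilon>}" for x
  proof -
    have "\<bar>x\<bar> < d" "x \<in> {-1..1}" using that \<epsilon> \<delta> by auto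
    then have "\<bar>F x y - F 0 y\<bar> < c * \<delta>" if "y \<in> {-\<delta>, \<delta>}" for y
      using Fx[of x 0 y] d[of x] \<delta> that by fastforce
    moreover have "c * \<delta> \<le> F 0 \<delta>" "c * \<delta> \<le> - F 0 (-\<delta>)"
      using slope[of 0 0 \<delta>] slope[of 0 "-\<delta>" 0] \<delta> F00 by auto
    ultimately show ?thesis
      by (smt (verit) insertCI)
  qed
  obtain f where f: "\<And>x. x \<in> {-\<epsilon>..\<epsilon>} \<Longrightarrow> f x \<in> {-\<delta><..<\<delta>}"
    "\<And>x y. x \<in> {-\<epsilon>..\<epsilon>} \<Longrightarrow> y \<in> {-\<delta>..\<delta>} \<Longrightarrow> F x y = 0 \<longleftrightarrow> y = f x"
    and f_G: "\<And>x x'. x \<in> {-\<epsilon>..\<epsilon>} \<Longrightarrow> x' \<in> {-\<epsilon>..\<epsilon>} \<Longrightarrow> c * \<bar>f x - f x'\<bar> \<le> \<bar>G x - G x'\<bar>"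
  proof (rule implicit_function_if_uniform_slope[of c \<delta> "{-\<epsilon>..\<epsilon>}" F G])
    show "c * (y' - y) \<le> F x y' - F x y"
      if "x \<in> {-\<epsilon>..\<epsilon>}" "-\<delta> \<le> y" "y \<le> y'" "y' \<le> \<delta>" for x y y'
      using slope[of x y y'] that \<epsilon> by auto
    show "continuous_on {-\<delta>..\<delta>} (F x)" if "x \<in> {-\<epsilon>..\<epsilon>}" for x
      using cont[of x] that \<epsilon> \<delta> by (auto elim!: continuous_on_subset)
    show "\<bar>F x y - F x' y\<bar> \<le> \<bar>G x - G x'\<bar>"
      if "x \<in> {-\<epsilon>..\<epsilon>}" "x' \<in> {-\<epsilon>..\<epsilon>}" "y \<in> {-\<delta>..\<delta>}" for x x' y
      using Fx[of x x' y] that \<epsilon> \<delta> by auto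
  qed (use \<open>0 < c\<close> \<delta> sign that in auto)
  have "c * \<bar>f y - f x\<bar> \<le> integral {x..y} g" if "-\<epsilon> \<le> x" "x \<le> y" "y \<le> \<epsilon>" for x y
  proof -
    have "integral {x..y} g = G y - G x"
      unfolding G_def using that \<epsilon> \<delta> by (intro integral_Icc_eq_diff_indefinite[OF g(1)]) auto
    moreover have "0 \<le> integral {x..y} g"
      using that \<epsilon> \<delta> g(2) by (intro integral_nonneg integrable_on_subinterval[OF g(1)]) auto
    ultimately show ?thesis using f_G[of y x] that by auto
  qed
  with that[of \<epsilon> f] \<epsilon> f show ?thesis by blast
qed

lemma implicit_zero_locus:
  fixes F Fy :: "real \<Rightarrow> real \<Rightarrow> real" and g0 g1 :: "real \<Rightarrow> real"
  assumes Fy: "\<And>x y. x \<in> {-1..1} \<Longrightarrow> y \<in> {-1..1} \<Longrightarrow>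
                 (F x has_real_derivative Fy x y) (at y within {-1..1})"
    and Fy0: "continuous_on {-1..1} (Fy 0)"
    and g0: "g0 integrable_on {-1..1}" "\<And>x. x \<in> {-1..1} \<Longrightarrow> 0 \<le> g0 x"
      "\<And>y a b. y \<in> {-1..1} \<Longrightarrow> -1 \<le> a \<Longrightarrow> a \<le> b \<Longrightarrow> b \<le> 1 \<Longrightarrow>
         \<bar>F b y - F a y\<bar> \<le> integral {a..b} g0"
    and g1: "g1 integrable_on {-1..1}"
      "\<And>y a b. y \<in> {-1..1} \<Longrightarrow> -1 \<le> a \<Longrightarrow> a \<le> b \<Longrightarrow> b \<le> 1 \<Longrightarrow>
         \<bar>Fy b y - Fy a y\<bar> \<le> integral {a..b} g1"
    and F00: "F 0 0 = 0" and Fy00: "Fy 0 0 \<noteq> 0"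
  obtains c \<epsilon> \<delta> f where "0 < c" "0 < \<epsilon>" "\<epsilon> < \<delta>" "\<delta> < 1"
    "\<And>x. x \<in> {-\<epsilon>..\<epsilon>} \<Longrightarrow> f x \<in> {-\<delta><..<\<delta>}"
    "\<And>x y. x \<in> {-\<epsilon>..\<epsilon>} \<Longrightarrow> y \<in> {-\<delta>..\<delta>} \<Longrightarrow> F x y = 0 \<longleftrightarrow> y = f x"
    "\<And>x y. -\<epsilon> \<le> x \<Longrightarrow> x \<le> y \<Longrightarrow> y \<le> \<epsilon> \<Longrightarrow> c * \<bar>f y - f x\<bar> \<le> integral {x..y} g0"
proof -
  define \<sigma> where "\<sigma> = sgn (Fy 0 0)"
  have \<sigma>: "\<bar>\<sigma>\<bar> = 1" "0 < \<sigma> * Fy 0 0" using Fy00 by (auto simp: \<sigma>_def sgn_if)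
  have scaled: "\<bar>\<sigma> * v - \<sigma> * w\<bar> = \<bar>v - w\<bar>" for v w
    using \<sigma>(1) by (simp add: right_diff_distrib[symmetric] abs_mult)
  have dF: "((\<lambda>y. \<sigma> * F x y) has_real_derivative \<sigma> * Fy x y) (at y within {-1..1})"
    if "x \<in> {-1..1}" "y \<in> {-1..1}" for x y
    using Fy[OF that] by (rule DERIV_cmult)
  obtain c \<delta> where c\<delta>: "0 < c" "0 < \<delta>" "\<delta> < 1" and
    slope: "\<And>x y y'. \<bar>x\<bar> \<le> \<delta> \<Longrightarrow> -\<delta> \<le> y \<Longrightarrow> y \<le> y' \<Longrightarrow> y' \<le> \<delta> \<Longrightarrow>
              c * (y' - y) \<le> \<sigma> * F x y' - \<sigma> * F x y"
  proof (rule slope_bound_near_origin[of "\<lambda>x y. \<sigma> * F x y" "\<lambda>x y. \<sigma> * Fy x y" g1])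
    show "\<bar>\<sigma> * Fy b y - \<sigma> * Fy a y\<bar> \<le> integral {a..b} g1"
      if "y \<in> {-1..1}" "-1 \<le> a" "a \<le> b" "b \<le> 1" for y a b
      using g1(2)[OF that] by (simp only: scaled)
  qed (use dF Fy0 g1(1) \<sigma>(2) that in \<open>auto intro: continuous_intros\<close>)
  have "continuous_on {-1..1} (\<lambda>y. \<sigma> * F x y)" if "x \<in> {-1..1}" for x
    using dF[OF that] unfolding continuous_on_eq_continuous_within by (blast intro: DERIV_continuous)
  then obtain \<epsilon> f where "0 < \<epsilon>" "\<epsilon> < \<delta>" "\<And>x. x \<in> {-\<epsilon>..\<epsilon>} \<Longrightarrow> f x \<in> {-\<delta><..<\<delta>}"
    "\<And>x y. x \<in> {-\<epsilon>..\<epsilon>} \<Longrightarrow> y \<in> {-\<delta>..\<delta>} \<Longrightarrow> \<sigma> * F x y = 0 \<longleftrightarrow> y = f x"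
    "\<And>x y. -\<epsilon> \<le> x \<Longrightarrow> x \<le> y \<Longrightarrow> y \<le> \<epsilon> \<Longrightarrow> c * \<bar>f y - f x\<bar> \<le> integral {x..y} g0"
  proof (rule implicit_zero_locus_if_slope[of "\<lambda>x y. \<sigma> * F x y" g0 c \<delta>])
    show "\<bar>\<sigma> * F b y - \<sigma> * F a y\<bar> \<le> integral {a..b} g0"
      if "y \<in> {-1..1}" "-1 \<le> a" "a \<le> b" "b \<le> 1" for y a b
      using g0(3)[OF that] by (simp only: scaled)
  qed (use g0(1,2) F00 c\<delta> slope that in auto)
  moreover have "\<sigma> * F x y = 0 \<longleftrightarrow> F x y = 0" for x y
    using \<sigma>(1) by auto
  ultimately show ?thesis
    using that[of c \<epsilon> \<delta> f] c\<delta> by auto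
qed

lemma implicit_function_H1:
  fixes F Fy :: "real \<Rightarrow> real \<Rightarrow> real" and g0 g1 :: "real \<Rightarrow> real"
  assumes Fy: "\<And>x y. x \<in> {-1..1} \<Longrightarrow> y \<in> {-1..1} \<Longrightarrow>
                 (F x has_real_derivative Fy x y) (at y within {-1..1})"
    and Fy0: "continuous_on {-1..1} (Fy 0)"
    and g0: "L2 {-1..1} g0" "\<And>x. x \<in> {-1..1} \<Longrightarrow> 0 \<le> g0 x"
      "\<And>y a b. y \<in> {-1..1} \<Longrightarrow> -1 \<le> a \<Longrightarrow> a \<le> b \<Longrightarrow> b \<le> 1 \<Longrightarrow>
         \<bar>F b y - F a y\<bar> \<le> integral {a..b} g0"
    and g1: "L2 {-1..1} g1"
      "\<And>y a b. y \<in> {-1..1} \<Longrightarrow> -1 \<le> a \<Longrightarrow> a \<le> b \<Longrightarrow> b \<le> 1 \<Longrightarrow>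
         \<bar>Fy b y - Fy a y\<bar> \<le> integral {a..b} g1"
    and F00: "F 0 0 = 0" and Fy00: "Fy 0 0 \<noteq> 0"
  obtains \<epsilon> \<delta> f where "0 < \<epsilon>" "\<epsilon> < \<delta>" "\<delta> < 1" "f \<in> H1 {-\<epsilon><..<\<epsilon>}"
    "\<And>x. x \<in> {-\<epsilon><..<\<epsilon>} \<Longrightarrow> f x \<in> {-\<delta><..<\<delta>}"
    "\<And>x y. x \<in> {-\<epsilon><..<\<epsilon>} \<Longrightarrow> y \<in> {-\<delta><..<\<delta>} \<Longrightarrow> F x y = 0 \<longleftrightarrow> y = f x"
proof -
  obtain c \<epsilon> \<delta> f where c: "0 < c" and \<epsilon>\<delta>: "0 < \<epsilon>" "\<epsilon> < \<delta>" "\<delta> < 1"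
    and f: "\<And>x. x \<in> {-\<epsilon>..\<epsilon>} \<Longrightarrow> f x \<in> {-\<delta><..<\<delta>}"
      "\<And>x y. x \<in> {-\<epsilon>..\<epsilon>} \<Longrightarrow> y \<in> {-\<delta>..\<delta>} \<Longrightarrow> F x y = 0 \<longleftrightarrow> y = f x"
    and lip: "\<And>x y. -\<epsilon> \<le> x \<Longrightarrow> x \<le> y \<Longrightarrow> y \<le> \<epsilon> \<Longrightarrow> c * \<bar>f y - f x\<bar> \<le> integral {x..y} g0"
    using implicit_zero_locus[OF Fy Fy0 L2_imp_integrable_on_Icc[OF g0(1)] g0(2,3)
        L2_imp_integrable_on_Icc[OF g1(1)] g1(2) F00 Fy00]
    by blast
  define phi where "phi = (\<lambda>x. inverse c * g0 x)"
  have "f \<in> H1 {-\<epsilon><..<\<epsilon>}"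
  proof (rule H1_if_increments_dominated)
    show "L2 {-\<epsilon>..\<epsilon>} phi"
      unfolding phi_def using \<epsilon>\<delta> by (intro L2_cmult L2_subset[OF g0(1)]) auto
    show "0 \<le> phi x" if "x \<in> {-\<epsilon>..\<epsilon>}" for x
      using g0(2)[of x] that \<epsilon>\<delta> c by (simp add: phi_def)
    show "\<bar>f y - f x\<bar> \<le> integral {x..y} phi" if "-\<epsilon> \<le> x" "x \<le> y" "y \<le> \<epsilon>" for x y
    proof -
      have "c * integral {x..y} phi = integral {x..y} g0"
        unfolding phi_def using c by simp
      then have "c * \<bar>f y - f x\<bar> \<le> c * integral {x..y} phi"
        using lip[OF that] by simp
      then show ?thesis using c by simp
    qed
  qed (use \<epsilon>\<delta> in simp)
  then show ?thesis
    using that[of \<epsilon> \<delta> f] \<epsilon>\<delta> f by auto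
qed

lemma Hclass_increments_dominated:
  fixes F :: "real \<Rightarrow> real \<Rightarrow> real"
  assumes "Hclass {a..b} I F" "I \<noteq> {}"
  obtains g where "L2 {a..b} g" "\<And>x. x \<in> {a..b} \<Longrightarrow> 0 \<le> g x"
    "\<And>y s t. y \<in> I \<Longrightarrow> a \<le> s \<Longrightarrow> s \<le> t \<Longrightarrow> t \<le> b \<Longrightarrow> \<bar>F t y - F s y\<bar> \<le> integral {s..t} g"
proof -
  obtain Fx g where g: "L2 {a..b} g"
    and Fx: "\<And>y s t. y \<in> I \<Longrightarrow> s \<in> {a..b} \<Longrightarrow> t \<in> {a..b} \<Longrightarrow> s \<le> t \<Longrightarrow>
               ((\<lambda>x. Fx x y) has_integral (F t y - F s y)) {s..t}"
    and bnd: "\<And>x y. x \<in> {a..b} \<Longrightarrow> y \<in> I \<Longrightarrow> \<bar>Fx x y\<bar> \<le> g x"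
    using assms(1) unfolding Hclass_def by blast
  show ?thesis
  proof
    show "L2 {a..b} g" by (fact g)
    show "0 \<le> g x" if "x \<in> {a..b}" for x
      using bnd[OF that] assms(2) by (meson abs_ge_zero all_not_in_conv order_trans)
    fix y s t assume y: "y \<in> I" and st: "a \<le> s" "s \<le> t" "t \<le> b"
    have "norm (integral {s..t} (\<lambda>x. Fx x y)) \<le> integral {s..t} g"
      using Fx[OF y] bnd[OF _ y] st integrable_on_subinterval[OF L2_imp_integrable_on_Icc[OF g]]
      by (intro integral_norm_bound_integral) auto
    then show "\<bar>F t y - F s y\<bar> \<le> integral {s..t} g"
      using integral_unique[OF Fx[OF y]] st by auto
  qed
qed

lemma C1_on_imp_continuous_on:
  assumes "C1_on S h"
  shows "continuous_on S h"
  using assms unfolding C1_on_def continuous_on_eq_continuous_within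
  by (blast intro: DERIV_continuous)

theorem theorem5p5:
  fixes F Fy :: "real \<Rightarrow> real \<Rightarrow> real"
  assumes Fy: "\<forall>x\<in>{-1..1}. \<forall>y\<in>{-1..1}.
                 (F x has_real_derivative Fy x y) (at y within {-1..1})"
    and HF: "Hclass {-1..1} {-1..1} F"
    and HFy: "Hclass {-1..1} {-1..1} Fy"
    and F00: "F 0 0 = 0"
    and Fy00: "Fy 0 0 \<noteq> 0"
  shows "\<exists>a1 b1 a2 b2 f.
           -1 \<le> a1 \<and> a1 < 0 \<and> 0 < b1 \<and> b1 \<le> 1 \<and>
           -1 \<le> a2 \<and> a2 < 0 \<and> 0 < b2 \<and> b2 \<le> 1 \<and>
           f \<in> H1 {a1<..<b1} \<and> f ` {a1<..<b1} \<subseteq> {a2<..<b2} \<and>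
           (\<forall>x\<in>{a1<..<b1}. \<forall>y\<in>{a2<..<b2}. F x y = 0 \<longleftrightarrow> y = f x) \<and>
           (\<forall>g. g \<in> H1 {a1<..<b1} \<and> g ` {a1<..<b1} \<subseteq> {a2<..<b2} \<and>
                (\<forall>x\<in>{a1<..<b1}. \<forall>y\<in>{a2<..<b2}. F x y = 0 \<longleftrightarrow> y = g x)
                \<longrightarrow> (\<forall>x\<in>{a1<..<b1}. g x = f x))"
proof -
  have ne: "{-1..1::real} \<noteq> {}" by simp
  obtain g0 where g0: "L2 {-1..1} g0" "\<And>x. x \<in> {-1..1} \<Longrightarrow> 0 \<le> g0 x"
    "\<And>y a b. y \<in> {-1..1} \<Longrightarrow> -1 \<le> a \<Longrightarrow> a \<le> b \<Longrightarrow> b \<le> 1 \<Longrightarrow>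
       \<bar>F b y - F a y\<bar> \<le> integral {a..b} g0"
    by (rule Hclass_increments_dominated[OF HF ne]) (rule that)
  obtain g1 where g1: "L2 {-1..1} g1"
    "\<And>y a b. y \<in> {-1..1} \<Longrightarrow> -1 \<le> a \<Longrightarrow> a \<le> b \<Longrightarrow> b \<le> 1 \<Longrightarrow>
       \<bar>Fy b y - Fy a y\<bar> \<le> integral {a..b} g1"
    by (rule Hclass_increments_dominated[OF HFy ne]) (rule that)
  have Fy0: "continuous_on {-1..1} (Fy 0)"
    using HFy C1_on_imp_continuous_on unfolding Hclass_def by simp
  obtain \<epsilon> \<delta> f where "0 < \<epsilon>" "\<epsilon> < \<delta>" "\<delta> < 1" "f \<in> H1 {-\<epsilon><..<\<epsilon>}"
    "\<And>x. x \<in> {-\<epsilon><..<\<epsilon>} \<Longrightarrow> f x \<in> {-\<delta><..<\<delta>}"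
    and zero: "\<And>x y. x \<in> {-\<epsilon><..<\<epsilon>} \<Longrightarrow> y \<in> {-\<delta><..<\<delta>} \<Longrightarrow> F x y = 0 \<longleftrightarrow> y = f x"
    by (rule implicit_function_H1[of F Fy g0 g1]) (use Fy Fy0 g0 g1 F00 Fy00 that in auto)
  moreover have "g x = f x"
    if "g ` {-\<epsilon><..<\<epsilon>} \<subseteq> {-\<delta><..<\<delta>}" "\<forall>y\<in>{-\<delta><..<\<delta>}. F x y = 0 \<longleftrightarrow> y = g x"
      "x \<in> {-\<epsilon><..<\<epsilon>}" for g x
    using that zero[OF that(3), of "g x"] by blast
  ultimately show ?thesis
    by (intro exI[of _ "-\<epsilon>"] exI[of _ \<epsilon>] exI[of _ "-\<delta>"] exI[of _ \<delta>] exI[of _ f]) auto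
qed

end
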